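(* Let $\Gamma=S(\Lambda,V)$ and let $\sigma\in Z^2(\Gamma,U(1))$ be a 2-cocycle. Then $\sigma$ is cohomologous to a real cocycle, that is, to an element of $Z^2(\Gamma,U(1))$ of the form $\exp(2\pi i\zeta)$ with $\zeta\in Z^2(\Gamma,\mathbb{R})$.
   Context: Let $\mathbb{K}$ be a real quadratic field with real embeddings $\iota_1,\iota_2$. Let $L\subset\mathbb{K}$ be a lattice (free $\mathbb{Z}$-module of rank 2 spanning $\mathbb{K}$), and $V=\epsilon^{\mathbb{Z}}$ the group of totally positive units $u$ with $uL\subset L$, or a finite index subgroup, with $\epsilon=\iota_1(\epsilon)>1$, $\iota_2(\epsilon)=\epsilon^{-1}$. Let $\Lambda=\{(\iota_1(\ell),\iota_2(\ell)):\ell\in L\}\subset\mathbb{R}^2$, $A_\epsilon=\mathrm{diag}(\epsilon,\epsilon^{-1})$, and $S(\Lambda,V)=\Lambda\rtimes\mathbb{Z}$ with product $(\lambda,k)(\eta,r)=(\lambda+A_\epsilon^k\eta,k+r)$. Group cohomology with coefficients in $U(1)$, $\mathbb{R}$, $\mathbb{Z}$ is with trivial action. *)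

theory Defs
  imports Complex_Main
begin

text \<open>The real quadratic field K = Q(sqrt d) (d > 1 an integer that is not a perfect square);
  an element a + b sqrt d is represented by the pair (a, b) of rationals.\<close>

type_synonym qf = "rat \<times> rat"

definition kmult :: "int \<Rightarrow> qf \<Rightarrow> qf \<Rightarrow> qf" where
  "kmult d x y = (fst x * fst y + of_int d * snd x * snd y, fst x * snd y + snd x * fst y)"

definition iota1 :: "int \<Rightarrow> qf \<Rightarrow> real" where
  "iota1 d x = real_of_rat (fst x) + real_of_rat (snd x) * sqrt (real_of_int d)"

definition iota2 :: "int \<Rightarrow> qf \<Rightarrow> real" where
  "iota2 d x = real_of_rat (fst x) - real_of_rat (snd x) * sqrt (real_of_int d)"

definition qlattice :: "qf \<Rightarrow> qf \<Rightarrow> qf set" where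
  "qlattice w1 w2 = {(of_int m * fst w1 + of_int n * fst w2, of_int m * snd w1 + of_int n * snd w2)
                     | m n :: int. True}"

definition Lam :: "int \<Rightarrow> qf \<Rightarrow> qf \<Rightarrow> (real \<times> real) set" where
  "Lam d w1 w2 = (\<lambda>l. (iota1 d l, iota2 d l)) ` qlattice w1 w2"

definition Aeps :: "real \<Rightarrow> int \<Rightarrow> real \<times> real \<Rightarrow> real \<times> real" where
  "Aeps e k p = (e powi k * fst p, e powi (-k) * snd p)"

text \<open>The group S(Lambda, V) = Lambda \<rtimes> Z: carrier and product.\<close>
definition Scar :: "(real \<times> real) set \<Rightarrow> ((real \<times> real) \<times> int) set" where
  "Scar Lm = {(p, k). p \<in> Lm}"

definition Smul :: "real \<Rightarrow> (real \<times> real) \<times> int \<Rightarrow> (real \<times> real) \<times> int \<Rightarrow> (real \<times> real) \<times> int" where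
  "Smul e g h = ((fst (fst g) + fst (Aeps e (snd g) (fst h)),
                 snd (fst g) + snd (Aeps e (snd g) (fst h))), snd g + snd h)"

definition U1_cocycle :: "'g set \<Rightarrow> ('g \<Rightarrow> 'g \<Rightarrow> 'g) \<Rightarrow> ('g \<Rightarrow> 'g \<Rightarrow> complex) \<Rightarrow> bool" where
  "U1_cocycle G mul \<sigma> \<longleftrightarrow>
     (\<forall>g\<in>G. \<forall>h\<in>G. cmod (\<sigma> g h) = 1) \<and>
     (\<forall>g\<in>G. \<forall>h\<in>G. \<forall>k\<in>G. \<sigma> h k * \<sigma> g (mul h k) = \<sigma> (mul g h) k * \<sigma> g h)"

definition real_cocycle :: "'g set \<Rightarrow> ('g \<Rightarrow> 'g \<Rightarrow> 'g) \<Rightarrow> ('g \<Rightarrow> 'g \<Rightarrow> real) \<Rightarrow> bool" where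
  "real_cocycle G mul \<zeta> \<longleftrightarrow>
     (\<forall>g\<in>G. \<forall>h\<in>G. \<forall>k\<in>G. \<zeta> h k - \<zeta> (mul g h) k + \<zeta> g (mul h k) - \<zeta> g h = 0)"

definition U1_cohomologous :: "'g set \<Rightarrow> ('g \<Rightarrow> 'g \<Rightarrow> 'g) \<Rightarrow> ('g \<Rightarrow> 'g \<Rightarrow> complex) \<Rightarrow> ('g \<Rightarrow> 'g \<Rightarrow> complex) \<Rightarrow> bool" where
  "U1_cohomologous G mul \<sigma> \<tau> \<longleftrightarrow>
     (\<exists>\<beta>. (\<forall>g\<in>G. cmod (\<beta> g) = 1) \<and>
          (\<forall>g\<in>G. \<forall>h\<in>G. \<sigma> g h = \<tau> g h * (\<beta> g * \<beta> h / \<beta> (mul g h))))"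

end

theory Submission
  imports Defs "HOL-Algebra.Group"
begin

text \<open>
  A normalised U(1)-cocycle \<open>\<tau>\<close> is a coboundary as soon as the central extension of
  \<open>\<Gamma> = \<Lambda> \<rtimes> \<int>\<close> by U(1) that it defines has a homomorphic section. Let \<open>x\<^sub>1, x\<^sub>2\<close> be a basis
  of \<open>\<Lambda>\<close>, \<open>M\<close> the integer matrix of \<open>A\<^sub>\<epsilon>\<close> in it, and \<open>u\<close> a lift of the generator of \<open>\<int>\<close>.
  Dividing \<open>\<sigma>\<close> by the constant \<open>\<sigma>(1,1)\<close> and by \<open>exp(2\<pi>i\<zeta>)\<close> for a multiple \<open>\<zeta>\<close> of the real
  cocycle \<open>\<omega>(\<lambda>, A\<^sub>\<epsilon>\<^sup>k \<eta>)\<close>, where \<open>\<omega>\<close> is the (\<open>A\<^sub>\<epsilon>\<close>-invariant) determinant form, makes the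
  lifts of \<open>x\<^sub>1\<close> and \<open>x\<^sub>2\<close> commute, so that they generate a lift of \<open>\<Lambda>\<close>. Conjugation by \<open>u\<close>
  acts on this lift through \<open>M\<close> up to central factors \<open>k\<^sub>i\<close>; twisting the lifts of \<open>x\<^sub>i\<close> by
  central elements \<open>l\<^sub>i\<close> removes them once \<open>(M\<^sup>T - 1) l = k\<close>, which is solvable because
  \<open>det (M - 1) = 2 - tr M < 0\<close>. The twisted lift of \<open>\<Lambda>\<close> together with \<open>u\<close> is then a
  homomorphic section.
\<close>

section \<open>Powers in groups\<close>

lemma (in group) conjugation_hom: "u \<in> carrier G \<Longrightarrow> (\<lambda>x. u \<otimes> x \<otimes> inv u) \<in> hom G G"
  by (rule homI) (simp_all add: m_assoc, simp add: m_assoc[symmetric])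

lemma (in group) intertwine_int_pow:
  assumes "u \<in> carrier G" "x \<in> carrier G" "y \<in> carrier G" "u \<otimes> x = y \<otimes> u"
  shows "u \<otimes> x [^] (i::int) = y [^] i \<otimes> u"
proof -
  have conj_x: "u \<otimes> x \<otimes> inv u = y"
    using assms by (simp add: inv_solve_right')
  have "u \<otimes> x [^] i \<otimes> inv u = y [^] i"
    using hom_int_pow[OF conjugation_hom[OF assms(1)] assms(2) is_group is_group] conj_x by simp
  then show ?thesis
    using assms by (simp add: inv_solve_right')
qed

lemma (in group) commuting_int_pows:
  assumes "x \<in> carrier G" "y \<in> carrier G" "x \<otimes> y = y \<otimes> x"
  shows "x [^] (i::int) \<otimes> y [^] (j::int) = y [^] j \<otimes> x [^] i"
proof -
  have "y \<otimes> x [^] i = x [^] i \<otimes> y" using intertwine_int_pow[of y x x i] assms by simp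
  then show ?thesis using intertwine_int_pow[of "x [^] i" y y j] assms by simp
qed

lemma (in group) int_pow_unique:
  assumes "x \<in> carrier G" "\<And>i. f i \<in> carrier G" "f 0 = \<one>" "\<And>i. f (i + 1) = f i \<otimes> x"
  shows "f i = x [^] (i::int)"
proof (induction i rule: int_induct[where k=0])
  case base then show ?case using assms by simp
next
  case (step1 i)
  then show ?case using assms by (simp add: int_pow_mult)
next
  case (step2 i)
  have "f (i - 1) \<otimes> x = f i" using assms(4)[of "i - 1"] by simp
  then have "f (i - 1) = f i \<otimes> inv x" using assms by (metis inv_solve_right)
  then show ?case using step2 assms by (simp add: int_pow_diff)
qed

lemma (in group) int_pow_intertwine_action:
  assumes u: "u \<in> carrier G"
    and f: "\<And>p. p \<in> P \<Longrightarrow> f p \<in> carrier G"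
    and T: "\<And>p k. p \<in> P \<Longrightarrow> T k p \<in> P" "\<And>p. T 0 p = p" "\<And>p i j. T i (T j p) = T (i + j) p"
    and intertwine: "\<And>p. p \<in> P \<Longrightarrow> u \<otimes> f p = f (T 1 p) \<otimes> u"
    and p: "p \<in> P"
  shows "u [^] (k::int) \<otimes> f p = f (T k p) \<otimes> u [^] k"
  using p
proof (induction k arbitrary: p rule: int_induct[where k=0])
  case (step1 i)
  have "u [^] (i + 1) \<otimes> f p = u [^] i \<otimes> f (T 1 p) \<otimes> u"
    using step1.prems by (simp add: int_pow_mult intertwine u f T m_assoc)
  also have "\<dots> = f (T (i + 1) p) \<otimes> u [^] (i + 1)"
    using step1 by (simp add: int_pow_mult u f T m_assoc)
  finally show ?case .
next
  case (step2 i)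
  have inv_intertwine: "inv u \<otimes> f p = f (T (- 1) p) \<otimes> inv u"
    using intertwine[of "T (- 1) p"] step2.prems u f T by (simp add: inv_solve_left inv_solve_right m_assoc)
  have "u [^] (i - 1) \<otimes> f p = u [^] i \<otimes> f (T (- 1) p) \<otimes> inv u"
    using step2.prems by (simp add: int_pow_diff inv_intertwine u f T m_assoc)
  also have "\<dots> = f (T (i - 1) p) \<otimes> u [^] (i - 1)"
    using step2 by (simp add: int_pow_diff u f T m_assoc)
  finally show ?case .
qed (simp add: f T)

section \<open>Cocycles with values in U(1) and \<open>\<real>\<close>\<close>

definition exp2pi :: "real \<Rightarrow> complex" where
  "exp2pi t = exp (2 * complex_of_real pi * \<i> * complex_of_real t)"

lemma exp2pi_add: "exp2pi (s + t) = exp2pi s * exp2pi t"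
  by (simp add: exp2pi_def distrib_left exp_add[symmetric] algebra_simps)

lemma norm_exp2pi [simp]: "cmod (exp2pi t) = 1"
  unfolding exp2pi_def by (simp add: norm_exp_eq_Re)

lemma exp2pi_nonzero [simp]: "exp2pi t \<noteq> 0"
  using norm_exp2pi[of t] by fastforce

lemma exp2pi_0 [simp]: "exp2pi 0 = 1"
  by (simp add: exp2pi_def)

lemma exp2pi_minus: "exp2pi (- t) = inverse (exp2pi t)"
  using exp2pi_add[of t "- t"] by (simp add: field_simps)

lemma exp2pi_Arg: "cmod z = 1 \<Longrightarrow> exp2pi (Arg z / (2 * pi)) = z"
  unfolding exp2pi_def using rcis_cmod_Arg[of z] by (simp add: cis_conv_exp[symmetric] rcis_def)

lemma U1_cocycle_divide:
  assumes \<sigma>: "U1_cocycle G mul \<sigma>" and \<zeta>: "real_cocycle G mul \<zeta>" and c: "cmod c = 1"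
  shows "U1_cocycle G mul (\<lambda>g h. \<sigma> g h / (c * exp2pi (\<zeta> g h)))"
  unfolding U1_cocycle_def
proof (intro conjI ballI)
  fix g h assume "g \<in> G" "h \<in> G"
  then show "cmod (\<sigma> g h / (c * exp2pi (\<zeta> g h))) = 1"
    using \<sigma> c by (simp add: U1_cocycle_def norm_divide norm_mult)
next
  fix g h k assume "g \<in> G" "h \<in> G" "k \<in> G"
  then have "\<sigma> h k * \<sigma> g (mul h k) = \<sigma> (mul g h) k * \<sigma> g h"
    and "\<zeta> h k + \<zeta> g (mul h k) = \<zeta> (mul g h) k + \<zeta> g h"
    using \<sigma> \<zeta> unfolding U1_cocycle_def real_cocycle_def by (auto simp: algebra_simps)
  then have "exp2pi (\<zeta> h k) * exp2pi (\<zeta> g (mul h k)) = exp2pi (\<zeta> (mul g h) k) * exp2pi (\<zeta> g h)"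
    by (metis exp2pi_add)
  then show "\<sigma> h k / (c * exp2pi (\<zeta> h k)) * (\<sigma> g (mul h k) / (c * exp2pi (\<zeta> g (mul h k))))
      = \<sigma> (mul g h) k / (c * exp2pi (\<zeta> (mul g h) k)) * (\<sigma> g h / (c * exp2pi (\<zeta> g h)))"
    using \<open>\<sigma> h k * \<sigma> g (mul h k) = _\<close> by (simp add: field_simps)
qed

lemma U1_cohomologous_if_coboundary_factor:
  assumes \<beta>: "\<forall>g\<in>G. cmod (\<beta> g) = 1" "\<forall>g\<in>G. \<forall>h\<in>G. \<tau> g h = \<beta> (mul g h) / (\<beta> g * \<beta> h)"
    and closed: "\<And>g h. g \<in> G \<Longrightarrow> h \<in> G \<Longrightarrow> mul g h \<in> G"
    and c: "cmod c = 1"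
    and factor: "\<And>g h. g \<in> G \<Longrightarrow> h \<in> G \<Longrightarrow> \<sigma> g h = c * \<rho> g h * \<tau> g h"
  shows "U1_cohomologous G mul \<sigma> \<rho>"
  unfolding U1_cohomologous_def
proof (intro exI conjI ballI)
  fix g assume "g \<in> G"
  then show "cmod (c / \<beta> g) = 1" using \<beta> c by (simp add: norm_divide)
next
  fix g h assume g: "g \<in> G" and h: "h \<in> G"
  have "\<beta> g \<noteq> 0" "\<beta> h \<noteq> 0" "\<beta> (mul g h) \<noteq> 0"
    using \<beta>(1) g h closed[OF g h] by fastforce+
  then show "\<sigma> g h = \<rho> g h * (c / \<beta> g * (c / \<beta> h) / (c / \<beta> (mul g h)))"
    using factor[OF g h] \<beta>(2) g h c by (auto simp: field_simps)
qed

section \<open>Central extensions by U(1)\<close>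

locale U1_extension = group \<Gamma> for \<Gamma> (structure) +
  fixes \<tau> :: "'a \<Rightarrow> 'a \<Rightarrow> complex"
  assumes cocycle: "U1_cocycle (carrier \<Gamma>) (\<otimes>) \<tau>"
    and normalised: "\<tau> \<one> \<one> = 1"
begin

lemma norm_\<tau>: "g \<in> carrier \<Gamma> \<Longrightarrow> h \<in> carrier \<Gamma> \<Longrightarrow> cmod (\<tau> g h) = 1"
  using cocycle unfolding U1_cocycle_def by auto

lemma \<tau>_nonzero: "g \<in> carrier \<Gamma> \<Longrightarrow> h \<in> carrier \<Gamma> \<Longrightarrow> \<tau> g h \<noteq> 0"
  using norm_\<tau> by fastforce

lemma \<tau>_cocycle_eq: "g \<in> carrier \<Gamma> \<Longrightarrow> h \<in> carrier \<Gamma> \<Longrightarrow> k \<in> carrier \<Gamma> \<Longrightarrow>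
    \<tau> h k * \<tau> g (h \<otimes> k) = \<tau> (g \<otimes> h) k * \<tau> g h"
  using cocycle unfolding U1_cocycle_def by auto

lemma \<tau>_one_left [simp]: "g \<in> carrier \<Gamma> \<Longrightarrow> \<tau> \<one> g = 1"
  using \<tau>_cocycle_eq[of \<one> \<one> g] \<tau>_nonzero[of \<one> g] normalised by simp

lemma \<tau>_one_right [simp]: "g \<in> carrier \<Gamma> \<Longrightarrow> \<tau> g \<one> = 1"
  using \<tau>_cocycle_eq[of g \<one> \<one>] \<tau>_nonzero[of g \<one>] normalised by simp

definition ext :: "(complex \<times> 'a) monoid" where
  "ext = \<lparr>carrier = {X. cmod (fst X) = 1 \<and> snd X \<in> carrier \<Gamma>},
          mult = (\<lambda>X Y. (fst X * fst Y * \<tau> (snd X) (snd Y), snd X \<otimes> snd Y)),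
          one = (1, \<one>)\<rparr>"

lemma ext_carrier: "X \<in> carrier ext \<longleftrightarrow> cmod (fst X) = 1 \<and> snd X \<in> carrier \<Gamma>"
  by (simp add: ext_def)

lemma ext_mult: "X \<otimes>\<^bsub>ext\<^esub> Y = (fst X * fst Y * \<tau> (snd X) (snd Y), snd X \<otimes> snd Y)"
  by (simp add: ext_def)

lemma ext_one: "\<one>\<^bsub>ext\<^esub> = (1, \<one>)"
  by (simp add: ext_def)

lemma ext_group: "group ext"
proof (rule groupI)
  fix X Y assume "X \<in> carrier ext" "Y \<in> carrier ext"
  then show "X \<otimes>\<^bsub>ext\<^esub> Y \<in> carrier ext"
    by (simp add: ext_carrier ext_mult norm_mult norm_\<tau>)
next
  fix X Y Z assume "X \<in> carrier ext" "Y \<in> carrier ext" "Z \<in> carrier ext"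
  then show "X \<otimes>\<^bsub>ext\<^esub> Y \<otimes>\<^bsub>ext\<^esub> Z = X \<otimes>\<^bsub>ext\<^esub> (Y \<otimes>\<^bsub>ext\<^esub> Z)"
    using \<tau>_cocycle_eq[of "snd X" "snd Y" "snd Z"] by (simp add: ext_carrier ext_mult m_assoc)
next
  fix X assume X: "X \<in> carrier ext"
  let ?g = "snd X"
  define Y where "Y = (inverse (fst X * \<tau> (inv ?g) ?g), inv ?g)"
  have g: "?g \<in> carrier \<Gamma>" "inv ?g \<in> carrier \<Gamma>" and "fst X \<noteq> 0"
    using X by (auto simp: ext_carrier)
  then have "Y \<in> carrier ext" "Y \<otimes>\<^bsub>ext\<^esub> X = \<one>\<^bsub>ext\<^esub>"
    using X norm_\<tau>[OF g(2,1)] \<tau>_nonzero[OF g(2,1)]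
    by (simp_all add: Y_def ext_carrier ext_mult ext_one norm_mult norm_inverse)
      (simp add: field_simps)
  then show "\<exists>Y\<in>carrier ext. Y \<otimes>\<^bsub>ext\<^esub> X = \<one>\<^bsub>ext\<^esub>" by blast
qed (auto simp: ext_carrier ext_mult ext_one)

end

sublocale U1_extension \<subseteq> E: group ext
  by (rule ext_group)

context U1_extension
begin

lemma snd_hom: "snd \<in> hom ext \<Gamma>"
  by (rule homI) (auto simp: ext_carrier ext_mult)

lemma snd_int_pow: "X \<in> carrier ext \<Longrightarrow> snd (X [^]\<^bsub>ext\<^esub> (i::int)) = snd X [^] i"
  using hom_int_pow[OF snd_hom _ ext_group is_group] by simp

definition central :: "real \<Rightarrow> complex \<times> 'a" where
  "central t = (exp2pi t, \<one>)"

lemma central_closed [simp]: "central t \<in> carrier ext"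
  by (simp add: central_def ext_carrier)

lemma central_mult: "X \<in> carrier ext \<Longrightarrow> central t \<otimes>\<^bsub>ext\<^esub> X = (exp2pi t * fst X, snd X)"
  by (simp add: central_def ext_mult ext_carrier)

lemma central_commute: "X \<in> carrier ext \<Longrightarrow> central t \<otimes>\<^bsub>ext\<^esub> X = X \<otimes>\<^bsub>ext\<^esub> central t"
  by (simp add: central_mult central_def ext_mult ext_carrier)

lemma central_add: "central s \<otimes>\<^bsub>ext\<^esub> central t = central (s + t)"
  by (simp add: central_def ext_mult exp2pi_add)

lemma central_int_pow: "central t [^]\<^bsub>ext\<^esub> (i::int) = central (of_int i * t)"
proof (rule E.int_pow_unique[symmetric])
  fix i :: int
  show "central (of_int (i + 1) * t) = central (of_int i * t) \<otimes>\<^bsub>ext\<^esub> central t"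
    by (simp add: central_add algebra_simps)
qed (simp_all add: central_def ext_one ext_carrier)

lemma central_mult_int_pow:
  "X \<in> carrier ext \<Longrightarrow> (central t \<otimes>\<^bsub>ext\<^esub> X) [^]\<^bsub>ext\<^esub> (i::int) = central (of_int i * t) \<otimes>\<^bsub>ext\<^esub> X [^]\<^bsub>ext\<^esub> i"
  using E.int_pow_mult_distrib[OF central_commute] by (simp add: central_int_pow)

lemma same_fibre:
  assumes "X \<in> carrier ext" "Y \<in> carrier ext" "snd X = snd Y"
  shows "\<exists>t. X = central t \<otimes>\<^bsub>ext\<^esub> Y"
proof
  let ?z = "fst X / fst Y"
  have "cmod ?z = 1" "fst Y \<noteq> 0"
    using assms by (auto simp: ext_carrier norm_divide)
  then have "exp2pi (Arg ?z / (2 * pi)) * fst Y = fst X"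
    using exp2pi_Arg by simp
  then show "X = central (Arg ?z / (2 * pi)) \<otimes>\<^bsub>ext\<^esub> Y"
    using assms by (simp add: central_mult prod_eq_iff)
qed

lemma coboundary_of_hom_section:
  assumes "\<And>g. g \<in> carrier \<Gamma> \<Longrightarrow> s g \<in> carrier ext"
    and "\<And>g. g \<in> carrier \<Gamma> \<Longrightarrow> snd (s g) = g"
    and "\<And>g h. g \<in> carrier \<Gamma> \<Longrightarrow> h \<in> carrier \<Gamma> \<Longrightarrow> s g \<otimes>\<^bsub>ext\<^esub> s h = s (g \<otimes> h)"
  shows "\<exists>\<beta>. (\<forall>g\<in>carrier \<Gamma>. cmod (\<beta> g) = 1) \<and>
             (\<forall>g\<in>carrier \<Gamma>. \<forall>h\<in>carrier \<Gamma>. \<tau> g h = \<beta> (g \<otimes> h) / (\<beta> g * \<beta> h))"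
proof (intro exI conjI ballI)
  fix g assume "g \<in> carrier \<Gamma>"
  then show "cmod (fst (s g)) = 1" using assms(1) by (simp add: ext_carrier)
next
  fix g h assume g: "g \<in> carrier \<Gamma>" and h: "h \<in> carrier \<Gamma>"
  have "fst (s g) * fst (s h) * \<tau> g h = fst (s g \<otimes>\<^bsub>ext\<^esub> s h)"
    by (simp add: ext_mult assms(2)[OF g] assms(2)[OF h])
  also have "\<dots> = fst (s (g \<otimes> h))"
    by (simp add: assms(3)[OF g h])
  finally have "fst (s g) * fst (s h) * \<tau> g h = fst (s (g \<otimes> h))" .
  moreover have "fst (s g) \<noteq> 0" "fst (s h) \<noteq> 0"
    using assms(1)[OF g] assms(1)[OF h] by (auto simp: ext_carrier)
  ultimately show "\<tau> g h = fst (s (g \<otimes> h)) / (fst (s g) * fst (s h))"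
    by (simp add: field_simps)
qed

end

section \<open>The group \<open>S(\<Lambda>, V)\<close>\<close>

lemma Aeps_0 [simp]: "Aeps e 0 p = p"
  by (simp add: Aeps_def)

lemma power_int_minus_diff: "(e::real) \<noteq> 0 \<Longrightarrow> e powi (- k - r) = e powi (- k) * e powi (- r)"
  by (metis diff_conv_add_uminus power_int_add)

lemma Aeps_Aeps: "(e::real) \<noteq> 0 \<Longrightarrow> Aeps e k (Aeps e r p) = Aeps e (k + r) p"
  by (simp add: Aeps_def power_int_add power_int_minus_diff algebra_simps)

lemma Aeps_add:
  "Aeps e k (fst p + fst q, snd p + snd q) = (fst (Aeps e k p) + fst (Aeps e k q), snd (Aeps e k p) + snd (Aeps e k q))"
  by (simp add: Aeps_def algebra_simps)

lemma Smul_assoc: "(e::real) \<noteq> 0 \<Longrightarrow> Smul e (Smul e g h) k = Smul e g (Smul e h k)"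
  by (simp add: Smul_def Aeps_def power_int_add power_int_minus_diff algebra_simps)

definition omega :: "real \<times> real \<Rightarrow> real \<times> real \<Rightarrow> real" where
  "omega p q = fst p * snd q - snd p * fst q"

lemma omega_add_left: "omega (fst p + fst p', snd p + snd p') q = omega p q + omega p' q"
  by (simp add: omega_def algebra_simps)

lemma omega_add_right: "omega p (fst q + fst q', snd q + snd q') = omega p q + omega p q'"
  by (simp add: omega_def algebra_simps)

lemma omega_Aeps: "(e::real) \<noteq> 0 \<Longrightarrow> omega (Aeps e k p) (Aeps e k q) = omega p q"
  by (simp add: omega_def Aeps_def power_int_minus field_simps)

lemma real_cocycle_omega:
  assumes "(e::real) \<noteq> 0"
  shows "real_cocycle S (Smul e) (\<lambda>g h. c * omega (fst g) (Aeps e (snd g) (fst h)))"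
  unfolding real_cocycle_def
proof (intro ballI)
  fix g h k :: "(real \<times> real) \<times> int"
  let ?f = "\<lambda>g h. omega (fst g) (Aeps e (snd g) (fst h))"
  let ?r = "omega (fst g) (Aeps e (snd g + snd h) (fst k))"
  have "?f (Smul e g h) k = ?r + ?f h k"
    using omega_Aeps[OF assms, of "snd g" "fst h" "Aeps e (snd h) (fst k)"]
    by (simp add: Smul_def omega_add_left Aeps_Aeps[OF assms])
  moreover have "?f g (Smul e h k) = ?f g h + ?r"
    by (simp add: Smul_def Aeps_add omega_add_right Aeps_Aeps[OF assms])
  ultimately show "c * ?f h k - c * ?f (Smul e g h) k + c * ?f g (Smul e h k) - c * ?f g h = 0"
    by (simp add: algebra_simps)
qed

text \<open>\<open>\<Lambda> = \<int>(x1, y1) + \<int>(x2, y2)\<close>, and \<open>A\<^sub>e\<close> maps \<open>(xj, yj)\<close> to \<open>m1j (x1, y1) + m2j (x2, y2)\<close>.\<close>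
locale stable_lattice =
  fixes e x1 y1 x2 y2 :: real and m11 m12 m21 m22 :: int
  assumes e_gt_1: "e > 1"
    and basis_indep: "x1 * y2 - x2 * y1 \<noteq> 0"
    and A_basis1: "e * x1 = m11 * x1 + m21 * x2" "inverse e * y1 = m11 * y1 + m21 * y2"
    and A_basis2: "e * x2 = m12 * x1 + m22 * x2" "inverse e * y2 = m12 * y1 + m22 * y2"
begin

definition lat :: "int \<Rightarrow> int \<Rightarrow> real \<times> real" where
  "lat a b = (of_int a * x1 + of_int b * x2, of_int a * y1 + of_int b * y2)"

definition Lat :: "(real \<times> real) set" where
  "Lat = range (case_prod lat)"

definition S :: "((real \<times> real) \<times> int) set" where
  "S = Scar Lat"

lemma e_nonzero: "e \<noteq> 0"
  using e_gt_1 by simp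

text \<open>\<open>(x1, x2)\<close> and \<open>(y1, y2)\<close> are eigenvectors of \<open>M\<^sup>T\<close> for \<open>e\<close> and \<open>1/e\<close>.\<close>
lemma charpoly_e: "(m11 - e) * (m22 - e) - real_of_int m12 * real_of_int m21 = 0"
proof -
  have "((m11 - e) * (m22 - e) - real_of_int m12 * real_of_int m21) * x1 = 0"
    and "((m11 - e) * (m22 - e) - real_of_int m12 * real_of_int m21) * x2 = 0"
    using A_basis1(1) A_basis2(1) by algebra+
  moreover have "x1 \<noteq> 0 \<or> x2 \<noteq> 0"
    using basis_indep by auto
  ultimately show ?thesis by auto
qed

lemma charpoly_inverse_e: "(m11 - inverse e) * (m22 - inverse e) - real_of_int m12 * real_of_int m21 = 0"
proof -
  have "((m11 - inverse e) * (m22 - inverse e) - real_of_int m12 * real_of_int m21) * y1 = 0"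
    and "((m11 - inverse e) * (m22 - inverse e) - real_of_int m12 * real_of_int m21) * y2 = 0"
    using A_basis1(2) A_basis2(2) by algebra+
  moreover have "y1 \<noteq> 0 \<or> y2 \<noteq> 0"
    using basis_indep by auto
  ultimately show ?thesis by auto
qed

lemma trace_eq: "e + inverse e = of_int (m11 + m22)"
proof -
  have "(e - inverse e) * (e + inverse e - (real_of_int m11 + real_of_int m22)) = 0"
    using charpoly_e charpoly_inverse_e by algebra
  moreover have "e - inverse e \<noteq> 0"
    using e_gt_1 less_1_mult[of e e] by (auto simp: field_simps)
  ultimately show ?thesis by simp
qed

lemma det_eq_1: "real_of_int m11 * real_of_int m22 - real_of_int m12 * real_of_int m21 = 1"
proof -
  have "e * (real_of_int m11 + real_of_int m22) = e * e + 1"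
    using trace_eq e_nonzero by (simp add: field_simps flip: of_int_add)
  then show ?thesis using charpoly_e by algebra
qed

lemma trace_gt_2: "real_of_int (m11 + m22) > 2"
proof -
  have "0 < (e - 1)\<^sup>2 / e"
    using e_gt_1 by simp
  also have "\<dots> = e + inverse e - 2"
    using e_nonzero by (simp add: power2_eq_square field_simps)
  finally show ?thesis by (simp add: trace_eq)
qed

lemma lat_add: "(fst (lat a b) + fst (lat c f), snd (lat a b) + snd (lat c f)) = lat (a + c) (b + f)"
  by (simp add: lat_def algebra_simps)

lemma lat_inj: "lat a b = lat c f \<Longrightarrow> a = c \<and> b = f"
proof -
  assume "lat a b = lat c f"
  then have "of_int (a - c) * x1 + of_int (b - f) * x2 = 0" "of_int (a - c) * y1 + of_int (b - f) * y2 = 0"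
    by (auto simp: lat_def algebra_simps)
  then have "of_int (a - c) * (x1 * y2 - x2 * y1) = 0" "of_int (b - f) * (x1 * y2 - x2 * y1) = 0"
    by algebra+
  then show ?thesis using basis_indep by auto
qed

lemma Aeps_lat: "Aeps e 1 (lat a b) = lat (a * m11 + b * m12) (a * m21 + b * m22)"
proof -
  have "e * (a * x1 + b * x2) = a * (e * x1) + b * (e * x2)"
    and "inverse e * (a * y1 + b * y2) = a * (inverse e * y1) + b * (inverse e * y2)"
    by (simp_all add: algebra_simps)
  then show ?thesis
    unfolding A_basis1 A_basis2 by (simp add: Aeps_def lat_def algebra_simps)
qed

lemma Aeps_inverse_lat: "Aeps e (- 1) (lat a b) = lat (a * m22 - b * m12) (b * m11 - a * m21)"
proof -
  have "m11 * m22 - m12 * m21 = 1"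
    using det_eq_1 by (metis of_int_eq_1_iff of_int_diff of_int_mult)
  then have "(a * m22 - b * m12) * m11 + (b * m11 - a * m21) * m12 = a"
    and "(a * m22 - b * m12) * m21 + (b * m11 - a * m21) * m22 = b"
    by algebra+
  then have "lat a b = Aeps e 1 (lat (a * m22 - b * m12) (b * m11 - a * m21))"
    unfolding Aeps_lat by simp
  then show ?thesis
    by (simp add: Aeps_Aeps[OF e_nonzero])
qed

lemma Lat_iff: "p \<in> Lat \<longleftrightarrow> (\<exists>a b. p = lat a b)"
  by (auto simp: Lat_def)

lemma lat_in_Lat [simp]: "lat a b \<in> Lat"
  by (auto simp: Lat_iff)

lemma Aeps_Lat: "p \<in> Lat \<Longrightarrow> Aeps e k p \<in> Lat"
proof (induction k rule: int_induct[where k=0])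
  case (step1 i)
  then obtain a b where "Aeps e i p = lat a b" by (auto simp: Lat_iff)
  then have "Aeps e (i + 1) p = Aeps e 1 (lat a b)"
    by (metis Aeps_Aeps[OF e_nonzero] add.commute)
  then show ?case by (simp add: Aeps_lat)
next
  case (step2 i)
  then obtain a b where "Aeps e i p = lat a b" by (auto simp: Lat_iff)
  then have "Aeps e (i - 1) p = Aeps e (- 1) (lat a b)"
    by (metis Aeps_Aeps[OF e_nonzero] uminus_add_conv_diff add.commute)
  then show ?case by (simp add: Aeps_inverse_lat)
qed simp

lemma Lat_add: "p \<in> Lat \<Longrightarrow> q \<in> Lat \<Longrightarrow> (fst p + fst q, snd p + snd q) \<in> Lat"
  using lat_add by (auto simp: Lat_iff) blast

lemma Lat_uminus: "p \<in> Lat \<Longrightarrow> (- fst p, - snd p) \<in> Lat"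
  using lat_in_Lat[of "- _" "- _"] by (auto simp: Lat_iff lat_def)

lemma zero_in_Lat [simp]: "(0, 0) \<in> Lat"
  using lat_in_Lat[of 0 0] by (simp add: lat_def)

lemma S_iff: "g \<in> S \<longleftrightarrow> fst g \<in> Lat"
  by (auto simp: S_def Scar_def)

lemma Smul_closed: "g \<in> S \<Longrightarrow> h \<in> S \<Longrightarrow> Smul e g h \<in> S"
  using Lat_add[OF _ Aeps_Lat] by (simp add: S_iff Smul_def)

definition S_grp :: "((real \<times> real) \<times> int) monoid" where
  "S_grp = \<lparr>carrier = S, mult = Smul e, one = ((0, 0), 0)\<rparr>"

lemma S_grp_simps [simp]:
  "carrier S_grp = S" "g \<otimes>\<^bsub>S_grp\<^esub> h = Smul e g h" "\<one>\<^bsub>S_grp\<^esub> = ((0, 0), 0)"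
  by (simp_all add: S_grp_def)

lemma group_S_grp: "group S_grp"
proof (rule groupI)
  fix g assume "g \<in> carrier S_grp"
  then have "(Aeps e (- snd g) (- fst (fst g), - snd (fst g)), - snd g) \<in> carrier S_grp"
    by (simp add: S_iff Lat_uminus Aeps_Lat)
  moreover have "Smul e (Aeps e (- snd g) (- fst (fst g), - snd (fst g)), - snd g) g = ((0, 0), 0)"
    by (simp add: Smul_def Aeps_def power_int_minus e_nonzero)
  ultimately show "\<exists>h\<in>carrier S_grp. h \<otimes>\<^bsub>S_grp\<^esub> g = \<one>\<^bsub>S_grp\<^esub>"
    by auto
qed (auto simp: Smul_closed Smul_assoc[OF e_nonzero] S_iff[of "((0, 0), 0)"] Smul_def[of _ "((0, 0), 0)"])

end

sublocale stable_lattice \<subseteq> S: group S_grp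
  by (rule group_S_grp)

context stable_lattice
begin

lemma S_int_pow_lat: "(lat a b, 0) [^]\<^bsub>S_grp\<^esub> (i::int) = (lat (i * a) (i * b), 0)"
proof (rule S.int_pow_unique[symmetric])
  fix i :: int
  show "(lat ((i + 1) * a) ((i + 1) * b), 0) = (lat (i * a) (i * b), 0) \<otimes>\<^bsub>S_grp\<^esub> (lat a b, 0)"
    by (simp add: Smul_def lat_def algebra_simps)
qed (simp_all add: S_iff lat_def[of 0 0])

lemma S_int_pow_gen: "((0, 0), 1) [^]\<^bsub>S_grp\<^esub> (i::int) = ((0, 0), i)"
  by (rule S.int_pow_unique[symmetric]) (simp_all add: S_iff Smul_def Aeps_def)

end

section \<open>Splitting the extension\<close>

lemma linear_system_2x2_solvable:
  fixes a b c d u v :: real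
  assumes det: "a * d - b * c \<noteq> 0"
  shows "\<exists>x y. a * x + b * y = u \<and> c * x + d * y = v"
proof (intro exI conjI)
  let ?x = "(u * d - b * v) / (a * d - b * c)" and ?y = "(a * v - c * u) / (a * d - b * c)"
  have "a * (u * d - b * v) + b * (a * v - c * u) = u * (a * d - b * c)"
    and "c * (u * d - b * v) + d * (a * v - c * u) = v * (a * d - b * c)"
    by algebra+
  then show "a * ?x + b * ?y = u" and "c * ?x + d * ?y = v"
    using det by (simp_all add: add_divide_distrib[symmetric] times_divide_eq_right)
qed

locale lattice_cocycle = stable_lattice +
  fixes \<tau> :: "(real \<times> real) \<times> int \<Rightarrow> (real \<times> real) \<times> int \<Rightarrow> complex"
  assumes \<tau>_U1_cocycle: "U1_cocycle S (Smul e) \<tau>"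
    and \<tau>_normalised: "\<tau> ((0, 0), 0) ((0, 0), 0) = 1"
    and \<tau>_basis_symmetric: "\<tau> (lat 1 0, 0) (lat 0 1, 0) = \<tau> (lat 0 1, 0) (lat 1 0, 0)"

sublocale lattice_cocycle \<subseteq> U1_extension S_grp \<tau>
  by unfold_locales (simp_all add: \<tau>_U1_cocycle \<tau>_normalised S_grp_def)

context lattice_cocycle
begin

definition X1 :: "complex \<times> (real \<times> real) \<times> int" where
  "X1 = (1, (lat 1 0, 0))"

definition X2 :: "complex \<times> (real \<times> real) \<times> int" where
  "X2 = (1, (lat 0 1, 0))"

definition U :: "complex \<times> (real \<times> real) \<times> int" where
  "U = (1, ((0, 0), 1))"

lemma lifts_closed [simp]: "X1 \<in> carrier ext" "X2 \<in> carrier ext" "U \<in> carrier ext"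
  by (simp_all add: X1_def X2_def U_def ext_carrier S_iff)

definition lift :: "real \<Rightarrow> real \<Rightarrow> int \<Rightarrow> int \<Rightarrow> complex \<times> (real \<times> real) \<times> int" where
  "lift l1 l2 a b = (central l1 \<otimes>\<^bsub>ext\<^esub> X1) [^]\<^bsub>ext\<^esub> a \<otimes>\<^bsub>ext\<^esub> (central l2 \<otimes>\<^bsub>ext\<^esub> X2) [^]\<^bsub>ext\<^esub> b"

lemma lift_closed [simp]: "lift l1 l2 a b \<in> carrier ext"
  by (simp add: lift_def)

lemma lift_0: "lift 0 0 a b = X1 [^]\<^bsub>ext\<^esub> a \<otimes>\<^bsub>ext\<^esub> X2 [^]\<^bsub>ext\<^esub> b"
  by (simp add: lift_def central_mult prod_eq_iff)

lemma lift_central: "lift l1 l2 a b = central (of_int a * l1 + of_int b * l2) \<otimes>\<^bsub>ext\<^esub> lift 0 0 a b"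
proof -
  have "lift l1 l2 a b = central (of_int a * l1) \<otimes>\<^bsub>ext\<^esub> (X1 [^]\<^bsub>ext\<^esub> a \<otimes>\<^bsub>ext\<^esub> central (of_int b * l2))
      \<otimes>\<^bsub>ext\<^esub> X2 [^]\<^bsub>ext\<^esub> b"
    by (simp add: lift_def central_mult_int_pow E.m_assoc)
  also have "\<dots> = (central (of_int a * l1) \<otimes>\<^bsub>ext\<^esub> central (of_int b * l2))
      \<otimes>\<^bsub>ext\<^esub> (X1 [^]\<^bsub>ext\<^esub> a \<otimes>\<^bsub>ext\<^esub> X2 [^]\<^bsub>ext\<^esub> b)"
    by (simp only: central_commute[symmetric] E.int_pow_closed lifts_closed) (simp add: E.m_assoc)
  finally show ?thesis
    by (simp add: central_add lift_0)
qed

lemma snd_lift: "snd (lift l1 l2 a b) = (lat a b, 0)"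
proof -
  have "snd (lift 0 0 a b) = Smul e (lat a 0, 0) (lat 0 b, 0)"
    using snd_int_pow[OF lifts_closed(1), of a] snd_int_pow[OF lifts_closed(2), of b] S_int_pow_lat[of 1 0 a] S_int_pow_lat[of 0 1 b]
    by (simp add: lift_0 ext_mult X1_def X2_def)
  then show ?thesis
    by (subst lift_central) (simp add: central_mult Smul_def lat_def)
qed

lemma lift_generators_commute:
  "(central l1 \<otimes>\<^bsub>ext\<^esub> X1) \<otimes>\<^bsub>ext\<^esub> (central l2 \<otimes>\<^bsub>ext\<^esub> X2)
     = (central l2 \<otimes>\<^bsub>ext\<^esub> X2) \<otimes>\<^bsub>ext\<^esub> (central l1 \<otimes>\<^bsub>ext\<^esub> X1)"
  using \<tau>_basis_symmetric by (simp add: central_def X1_def X2_def ext_mult Smul_def lat_def)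

lemma lift_generator_pows_commute:
  "(central l1 \<otimes>\<^bsub>ext\<^esub> X1) [^]\<^bsub>ext\<^esub> (i::int) \<otimes>\<^bsub>ext\<^esub> (central l2 \<otimes>\<^bsub>ext\<^esub> X2) [^]\<^bsub>ext\<^esub> (j::int)
     = (central l2 \<otimes>\<^bsub>ext\<^esub> X2) [^]\<^bsub>ext\<^esub> j \<otimes>\<^bsub>ext\<^esub> (central l1 \<otimes>\<^bsub>ext\<^esub> X1) [^]\<^bsub>ext\<^esub> i"
  using E.commuting_int_pows[OF _ _ lift_generators_commute] by simp

lemma lift_add: "lift l1 l2 a b \<otimes>\<^bsub>ext\<^esub> lift l1 l2 c f = lift l1 l2 (a + c) (b + f)"
proof -
  let ?Y1 = "central l1 \<otimes>\<^bsub>ext\<^esub> X1" and ?Y2 = "central l2 \<otimes>\<^bsub>ext\<^esub> X2"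
  have "lift l1 l2 a b \<otimes>\<^bsub>ext\<^esub> lift l1 l2 c f
      = ?Y1 [^]\<^bsub>ext\<^esub> a \<otimes>\<^bsub>ext\<^esub> (?Y2 [^]\<^bsub>ext\<^esub> b \<otimes>\<^bsub>ext\<^esub> ?Y1 [^]\<^bsub>ext\<^esub> c) \<otimes>\<^bsub>ext\<^esub> ?Y2 [^]\<^bsub>ext\<^esub> f"
    by (simp add: lift_def E.m_assoc)
  also have "\<dots> = (?Y1 [^]\<^bsub>ext\<^esub> a \<otimes>\<^bsub>ext\<^esub> ?Y1 [^]\<^bsub>ext\<^esub> c) \<otimes>\<^bsub>ext\<^esub> (?Y2 [^]\<^bsub>ext\<^esub> b \<otimes>\<^bsub>ext\<^esub> ?Y2 [^]\<^bsub>ext\<^esub> f)"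
    by (simp add: lift_generator_pows_commute[symmetric] E.m_assoc)
  finally show ?thesis
    by (simp add: lift_def E.int_pow_mult)
qed

lemma lift_int_pow: "lift l1 l2 c f [^]\<^bsub>ext\<^esub> (a::int) = lift l1 l2 (a * c) (a * f)"
proof -
  let ?Y1 = "central l1 \<otimes>\<^bsub>ext\<^esub> X1" and ?Y2 = "central l2 \<otimes>\<^bsub>ext\<^esub> X2"
  have "(?Y1 [^]\<^bsub>ext\<^esub> c \<otimes>\<^bsub>ext\<^esub> ?Y2 [^]\<^bsub>ext\<^esub> f) [^]\<^bsub>ext\<^esub> a
      = (?Y1 [^]\<^bsub>ext\<^esub> c) [^]\<^bsub>ext\<^esub> a \<otimes>\<^bsub>ext\<^esub> (?Y2 [^]\<^bsub>ext\<^esub> f) [^]\<^bsub>ext\<^esub> a"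
    by (rule E.int_pow_mult_distrib[OF lift_generator_pows_commute]) simp_all
  then show ?thesis
    by (simp add: lift_def E.int_pow_pow mult.commute)
qed

lemma U_lift_same_fibre:
  "\<exists>k. U \<otimes>\<^bsub>ext\<^esub> lift 0 0 a b = central k \<otimes>\<^bsub>ext\<^esub> (lift 0 0 (a * m11 + b * m12) (a * m21 + b * m22) \<otimes>\<^bsub>ext\<^esub> U)"
proof (rule same_fibre)
  show "snd (U \<otimes>\<^bsub>ext\<^esub> lift 0 0 a b) = snd (lift 0 0 (a * m11 + b * m12) (a * m21 + b * m22) \<otimes>\<^bsub>ext\<^esub> U)"
    using Aeps_lat[of a b] by (simp add: ext_mult snd_lift U_def Smul_def)
qed simp_all

lemma U_lift_corrected:
  assumes "U \<otimes>\<^bsub>ext\<^esub> lift 0 0 a b = central k \<otimes>\<^bsub>ext\<^esub> (lift 0 0 c f \<otimes>\<^bsub>ext\<^esub> U)"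
    and "of_int a * l1 + of_int b * l2 + k = of_int c * l1 + of_int f * l2"
  shows "U \<otimes>\<^bsub>ext\<^esub> lift l1 l2 a b = lift l1 l2 c f \<otimes>\<^bsub>ext\<^esub> U"
proof -
  have "U \<otimes>\<^bsub>ext\<^esub> lift l1 l2 a b = central (of_int a * l1 + of_int b * l2) \<otimes>\<^bsub>ext\<^esub> (U \<otimes>\<^bsub>ext\<^esub> lift 0 0 a b)"
    by (subst lift_central) (simp add: E.m_assoc[symmetric] central_commute[OF lifts_closed(3), symmetric])
  also have "\<dots> = central (of_int c * l1 + of_int f * l2) \<otimes>\<^bsub>ext\<^esub> lift 0 0 c f \<otimes>\<^bsub>ext\<^esub> U"
    by (simp add: assms(1) E.m_assoc[symmetric] central_add assms(2))
  finally show ?thesis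
    by (simp flip: lift_central)
qed

lemma equivariant_lift_of_generators:
  assumes "U \<otimes>\<^bsub>ext\<^esub> lift l1 l2 1 0 = lift l1 l2 m11 m21 \<otimes>\<^bsub>ext\<^esub> U"
    and "U \<otimes>\<^bsub>ext\<^esub> lift l1 l2 0 1 = lift l1 l2 m12 m22 \<otimes>\<^bsub>ext\<^esub> U"
  shows "U \<otimes>\<^bsub>ext\<^esub> lift l1 l2 a b = lift l1 l2 (a * m11 + b * m12) (a * m21 + b * m22) \<otimes>\<^bsub>ext\<^esub> U"
proof -
  have gen1: "U \<otimes>\<^bsub>ext\<^esub> lift l1 l2 a 0 = lift l1 l2 (a * m11) (a * m21) \<otimes>\<^bsub>ext\<^esub> U"
    using E.intertwine_int_pow[OF _ _ _ assms(1), of a] by (simp add: lift_int_pow)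
  have gen2: "U \<otimes>\<^bsub>ext\<^esub> lift l1 l2 0 b = lift l1 l2 (b * m12) (b * m22) \<otimes>\<^bsub>ext\<^esub> U"
    using E.intertwine_int_pow[OF _ _ _ assms(2), of b] by (simp add: lift_int_pow)
  have "U \<otimes>\<^bsub>ext\<^esub> lift l1 l2 a b = (U \<otimes>\<^bsub>ext\<^esub> lift l1 l2 a 0) \<otimes>\<^bsub>ext\<^esub> lift l1 l2 0 b"
    using lift_add[of l1 l2 a 0 0 b] by (simp add: E.m_assoc)
  also have "\<dots> = lift l1 l2 (a * m11) (a * m21) \<otimes>\<^bsub>ext\<^esub> lift l1 l2 (b * m12) (b * m22) \<otimes>\<^bsub>ext\<^esub> U"
    by (simp add: gen1 gen2 E.m_assoc)
  finally show ?thesis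
    by (simp add: lift_add)
qed

lemma exists_equivariant_lift:
  "\<exists>l1 l2. \<forall>a b. U \<otimes>\<^bsub>ext\<^esub> lift l1 l2 a b = lift l1 l2 (a * m11 + b * m12) (a * m21 + b * m22) \<otimes>\<^bsub>ext\<^esub> U"
proof -
  obtain k1 where k1: "U \<otimes>\<^bsub>ext\<^esub> lift 0 0 1 0 = central k1 \<otimes>\<^bsub>ext\<^esub> (lift 0 0 m11 m21 \<otimes>\<^bsub>ext\<^esub> U)"
    using U_lift_same_fibre[of 1 0] by auto
  obtain k2 where k2: "U \<otimes>\<^bsub>ext\<^esub> lift 0 0 0 1 = central k2 \<otimes>\<^bsub>ext\<^esub> (lift 0 0 m12 m22 \<otimes>\<^bsub>ext\<^esub> U)"
    using U_lift_same_fibre[of 0 1] by auto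
  \<comment> \<open>the determinant of \<open>M - 1\<close> is \<open>2 - tr M < 0\<close>, as \<open>M\<close> is hyperbolic\<close>
  have "(real_of_int m11 - 1) * (real_of_int m22 - 1) - real_of_int m21 * real_of_int m12 \<noteq> 0"
    using det_eq_1 trace_gt_2 by (simp add: algebra_simps)
  then obtain l1 l2 where
    "(real_of_int m11 - 1) * l1 + real_of_int m21 * l2 = k1" "real_of_int m12 * l1 + (real_of_int m22 - 1) * l2 = k2"
    using linear_system_2x2_solvable by blast
  then have "U \<otimes>\<^bsub>ext\<^esub> lift l1 l2 1 0 = lift l1 l2 m11 m21 \<otimes>\<^bsub>ext\<^esub> U"
    and "U \<otimes>\<^bsub>ext\<^esub> lift l1 l2 0 1 = lift l1 l2 m12 m22 \<otimes>\<^bsub>ext\<^esub> U"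
    by (auto intro!: U_lift_corrected[OF k1] U_lift_corrected[OF k2] simp: algebra_simps)
  then show ?thesis
    using equivariant_lift_of_generators by blast
qed

end

locale equivariant_lift = lattice_cocycle +
  fixes l1 l2 :: real
  assumes U_lift: "U \<otimes>\<^bsub>ext\<^esub> lift l1 l2 a b = lift l1 l2 (a * m11 + b * m12) (a * m21 + b * m22) \<otimes>\<^bsub>ext\<^esub> U"
begin

definition coords :: "real \<times> real \<Rightarrow> int \<times> int" where
  "coords = inv_into UNIV (case_prod lat)"

lemma coords_lat [simp]: "coords (lat a b) = (a, b)"
proof -
  have "inj (case_prod lat)"
    by (auto intro: injI dest: lat_inj)
  then show ?thesis
    using inv_into_f_f[of "case_prod lat" UNIV "(a, b)"] by (simp add: coords_def)
qed

definition lattice_lift :: "real \<times> real \<Rightarrow> complex \<times> (real \<times> real) \<times> int" where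
  "lattice_lift p = case_prod (lift l1 l2) (coords p)"

lemma lattice_lift_lat [simp]: "lattice_lift (lat a b) = lift l1 l2 a b"
  by (simp add: lattice_lift_def)

lemma lattice_lift_closed [simp]: "lattice_lift p \<in> carrier ext"
  by (simp add: lattice_lift_def case_prod_beta)

lemma lattice_lift_add:
  "p \<in> Lat \<Longrightarrow> q \<in> Lat \<Longrightarrow> lattice_lift p \<otimes>\<^bsub>ext\<^esub> lattice_lift q = lattice_lift (fst p + fst q, snd p + snd q)"
  by (auto simp: Lat_iff lift_add lat_add)

lemma snd_lattice_lift: "p \<in> Lat \<Longrightarrow> snd (lattice_lift p) = (p, 0)"
  by (auto simp: Lat_iff snd_lift)

lemma U_int_pow_lattice_lift:
  assumes "p \<in> Lat"
  shows "U [^]\<^bsub>ext\<^esub> (k::int) \<otimes>\<^bsub>ext\<^esub> lattice_lift p = lattice_lift (Aeps e k p) \<otimes>\<^bsub>ext\<^esub> U [^]\<^bsub>ext\<^esub> k"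
proof (rule E.int_pow_intertwine_action[where P = Lat])
  fix q assume "q \<in> Lat"
  then show "U \<otimes>\<^bsub>ext\<^esub> lattice_lift q = lattice_lift (Aeps e 1 q) \<otimes>\<^bsub>ext\<^esub> U"
    by (auto simp: Lat_iff U_lift Aeps_lat)
qed (simp_all add: assms Aeps_Lat Aeps_Aeps[OF e_nonzero])

lemma snd_U_int_pow: "snd (U [^]\<^bsub>ext\<^esub> (k::int)) = ((0, 0), k)"
  using snd_int_pow[OF lifts_closed(3), of k] S_int_pow_gen[of k] by (simp add: U_def)

definition splitting :: "(real \<times> real) \<times> int \<Rightarrow> complex \<times> (real \<times> real) \<times> int" where
  "splitting g = lattice_lift (fst g) \<otimes>\<^bsub>ext\<^esub> U [^]\<^bsub>ext\<^esub> (snd g)"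

lemma splitting_closed: "splitting g \<in> carrier ext"
  by (simp add: splitting_def)

lemma snd_splitting: "g \<in> S \<Longrightarrow> snd (splitting g) = g"
  by (simp add: splitting_def ext_mult S_iff snd_lattice_lift snd_U_int_pow Smul_def)

lemma splitting_mult:
  assumes g: "g \<in> S" and h: "h \<in> S"
  shows "splitting g \<otimes>\<^bsub>ext\<^esub> splitting h = splitting (Smul e g h)"
proof -
  have "splitting g \<otimes>\<^bsub>ext\<^esub> splitting h
      = lattice_lift (fst g) \<otimes>\<^bsub>ext\<^esub> (U [^]\<^bsub>ext\<^esub> snd g \<otimes>\<^bsub>ext\<^esub> lattice_lift (fst h)) \<otimes>\<^bsub>ext\<^esub> U [^]\<^bsub>ext\<^esub> snd h"
    by (simp add: splitting_def E.m_assoc)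
  also have "\<dots> = (lattice_lift (fst g) \<otimes>\<^bsub>ext\<^esub> lattice_lift (Aeps e (snd g) (fst h)))
      \<otimes>\<^bsub>ext\<^esub> (U [^]\<^bsub>ext\<^esub> snd g \<otimes>\<^bsub>ext\<^esub> U [^]\<^bsub>ext\<^esub> snd h)"
    using h by (simp add: U_int_pow_lattice_lift S_iff E.m_assoc)
  also have "\<dots> = splitting (Smul e g h)"
    using g h by (simp add: lattice_lift_add Aeps_Lat S_iff splitting_def Smul_def E.int_pow_mult)
  finally show ?thesis .
qed

end

context lattice_cocycle
begin

theorem \<tau>_coboundary:
  "\<exists>\<beta>. (\<forall>g\<in>S. cmod (\<beta> g) = 1) \<and> (\<forall>g\<in>S. \<forall>h\<in>S. \<tau> g h = \<beta> (Smul e g h) / (\<beta> g * \<beta> h))"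
proof -
  obtain l1 l2 where equivariant:
    "\<forall>a b. U \<otimes>\<^bsub>ext\<^esub> lift l1 l2 a b = lift l1 l2 (a * m11 + b * m12) (a * m21 + b * m22) \<otimes>\<^bsub>ext\<^esub> U"
    using exists_equivariant_lift by blast
  interpret equivariant_lift e x1 y1 x2 y2 m11 m12 m21 m22 \<tau> l1 l2
    by unfold_locales (rule equivariant[rule_format])
  show ?thesis
    using coboundary_of_hom_section[of splitting] by (simp add: splitting_closed snd_splitting splitting_mult)
qed

end

context stable_lattice
begin

definition symplectic_cocycle :: "real \<Rightarrow> (real \<times> real) \<times> int \<Rightarrow> (real \<times> real) \<times> int \<Rightarrow> real" where
  "symplectic_cocycle t g h = t * omega (fst g) (Aeps e (snd g) (fst h))"

lemma real_cocycle_symplectic: "real_cocycle S (Smul e) (symplectic_cocycle t)"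
  unfolding symplectic_cocycle_def by (rule real_cocycle_omega[OF e_nonzero])

lemma symplectic_cocycle_basis:
  "symplectic_cocycle t (lat 1 0, 0) (lat 0 1, 0) = t * (x1 * y2 - x2 * y1)"
  "symplectic_cocycle t (lat 0 1, 0) (lat 1 0, 0) = - (t * (x1 * y2 - x2 * y1))"
  by (simp_all add: symplectic_cocycle_def omega_def lat_def algebra_simps)

text \<open>The symplectic cocycle is antisymmetric on the basis, so its multiple by
  \<open>commutator_phase \<sigma>\<close> cancels the commutator \<open>\<sigma>(x\<^sub>1, x\<^sub>2) / \<sigma>(x\<^sub>2, x\<^sub>1)\<close>.\<close>
definition commutator_phase :: "((real \<times> real) \<times> int \<Rightarrow> (real \<times> real) \<times> int \<Rightarrow> complex) \<Rightarrow> real" where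
  "commutator_phase \<sigma> =
     Arg (\<sigma> (lat 1 0, 0) (lat 0 1, 0) / \<sigma> (lat 0 1, 0) (lat 1 0, 0)) / (4 * pi * (x1 * y2 - x2 * y1))"

lemma lattice_cocycle_quotient:
  assumes \<sigma>: "U1_cocycle S (Smul e) \<sigma>"
  defines "t \<equiv> commutator_phase \<sigma>"
  shows "lattice_cocycle e x1 y1 x2 y2 m11 m12 m21 m22
           (\<lambda>g h. \<sigma> g h / (\<sigma> ((0, 0), 0) ((0, 0), 0) * exp2pi (symplectic_cocycle t g h)))"
proof unfold_locales
  have norm_\<sigma>: "cmod (\<sigma> g h) = 1" if "g \<in> S" "h \<in> S" for g h
    using \<sigma> that by (simp add: U1_cocycle_def)
  show "U1_cocycle S (Smul e) (\<lambda>g h. \<sigma> g h / (\<sigma> ((0, 0), 0) ((0, 0), 0) * exp2pi (symplectic_cocycle t g h)))"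
    by (rule U1_cocycle_divide[OF \<sigma> real_cocycle_symplectic norm_\<sigma>]) (simp_all add: S_iff)
  show "\<sigma> ((0, 0), 0) ((0, 0), 0) / (\<sigma> ((0, 0), 0) ((0, 0), 0) * exp2pi (symplectic_cocycle t ((0, 0), 0) ((0, 0), 0))) = 1"
    using norm_\<sigma>[of "((0, 0), 0)" "((0, 0), 0)"] by (auto simp: S_iff symplectic_cocycle_def omega_def)
  let ?g1 = "(lat 1 0, 0)" and ?g2 = "(lat 0 1, 0)"
  let ?r = "\<sigma> ?g1 ?g2 / \<sigma> ?g2 ?g1"
  have "cmod (\<sigma> ?g1 ?g2) = 1" "cmod (\<sigma> ?g2 ?g1) = 1" "cmod (\<sigma> ((0, 0), 0) ((0, 0), 0)) = 1"
    by (simp_all add: norm_\<sigma> S_iff)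
  then have nonzero: "\<sigma> ?g1 ?g2 \<noteq> 0" "\<sigma> ?g2 ?g1 \<noteq> 0" "\<sigma> ((0, 0), 0) ((0, 0), 0) \<noteq> 0"
    and "cmod ?r = 1"
    by (auto simp: norm_divide)
  have "exp2pi (t * (x1 * y2 - x2 * y1)) / exp2pi (- (t * (x1 * y2 - x2 * y1)))
      = exp2pi (t * (x1 * y2 - x2 * y1) + t * (x1 * y2 - x2 * y1))"
    by (simp only: exp2pi_minus exp2pi_add divide_inverse inverse_inverse_eq)
  also have "\<dots> = exp2pi (Arg ?r / (2 * pi))"
  proof -
    have "a / (4 * pi * D) * D + a / (4 * pi * D) * D = a / (2 * pi)" if "D \<noteq> 0" for a D :: real
      using that by (simp add: field_simps)
    then show ?thesis
      using basis_indep by (simp add: t_def commutator_phase_def)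
  qed
  also have "\<dots> = ?r"
    using \<open>cmod ?r = 1\<close> by (rule exp2pi_Arg)
  finally show "\<sigma> ?g1 ?g2 / (\<sigma> ((0, 0), 0) ((0, 0), 0) * exp2pi (symplectic_cocycle t ?g1 ?g2))
      = \<sigma> ?g2 ?g1 / (\<sigma> ((0, 0), 0) ((0, 0), 0) * exp2pi (symplectic_cocycle t ?g2 ?g1))"
    using nonzero by (simp add: symplectic_cocycle_basis field_simps)
qed

theorem U1_cocycle_cohomologous_to_real:
  assumes \<sigma>: "U1_cocycle S (Smul e) \<sigma>"
  shows "\<exists>\<zeta>. real_cocycle S (Smul e) \<zeta> \<and> U1_cohomologous S (Smul e) \<sigma> (\<lambda>g h. exp2pi (\<zeta> g h))"
proof -
  let ?t = "commutator_phase \<sigma>"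
  let ?c = "\<sigma> ((0, 0), 0) ((0, 0), 0)"
  let ?\<tau> = "\<lambda>g h. \<sigma> g h / (?c * exp2pi (symplectic_cocycle ?t g h))"
  interpret lattice_cocycle e x1 y1 x2 y2 m11 m12 m21 m22 ?\<tau>
    using lattice_cocycle_quotient[OF \<sigma>] by simp
  obtain \<beta> where \<beta>: "\<forall>g\<in>S. cmod (\<beta> g) = 1" "\<forall>g\<in>S. \<forall>h\<in>S. ?\<tau> g h = \<beta> (Smul e g h) / (\<beta> g * \<beta> h)"
    using \<tau>_coboundary by blast
  have "cmod ?c = 1"
    using \<sigma> by (simp add: U1_cocycle_def S_iff)
  moreover have "\<sigma> g h = ?c * exp2pi (symplectic_cocycle ?t g h) * ?\<tau> g h" for g h
    using \<open>cmod ?c = 1\<close> by auto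
  ultimately have "U1_cohomologous S (Smul e) \<sigma> (\<lambda>g h. exp2pi (symplectic_cocycle ?t g h))"
    by (intro U1_cohomologous_if_coboundary_factor[OF \<beta> Smul_closed])
  then show ?thesis
    using real_cocycle_symplectic by blast
qed

end

section \<open>The lattice of a real quadratic field\<close>

lemma iota_kmult:
  assumes "d > 0"
  shows "iota1 d (kmult d x y) = iota1 d x * iota1 d y" "iota2 d (kmult d x y) = iota2 d x * iota2 d y"
proof -
  define s where "s = sqrt (real_of_int d)"
  have s: "real_of_int d = s * s"
    using assms by (simp add: s_def)
  define a where "a = real_of_rat (fst x)"
  define b where "b = real_of_rat (snd x)"
  define c where "c = real_of_rat (fst y)"
  define f where "f = real_of_rat (snd y)"
  have "iota1 d (kmult d x y) = a * c + real_of_int d * b * f + (a * f + b * c) * s"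
    "iota2 d (kmult d x y) = a * c + real_of_int d * b * f - (a * f + b * c) * s"
    by (simp_all add: iota1_def iota2_def kmult_def of_rat_add of_rat_mult a_def b_def c_def f_def s_def algebra_simps)
  moreover have "iota1 d x * iota1 d y = (a + b * s) * (c + f * s)" "iota2 d x * iota2 d y = (a - b * s) * (c - f * s)"
    by (simp_all add: iota1_def iota2_def a_def b_def c_def f_def s_def)
  ultimately show "iota1 d (kmult d x y) = iota1 d x * iota1 d y" "iota2 d (kmult d x y) = iota2 d x * iota2 d y"
    unfolding s by (simp_all add: algebra_simps)
qed

lemma iota_int_combination:
  "iota1 d (of_int m * fst w1 + of_int n * fst w2, of_int m * snd w1 + of_int n * snd w2)
     = of_int m * iota1 d w1 + of_int n * iota1 d w2"
  "iota2 d (of_int m * fst w1 + of_int n * fst w2, of_int m * snd w1 + of_int n * snd w2)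
     = of_int m * iota2 d w1 + of_int n * iota2 d w2"
  by (simp_all add: iota1_def iota2_def of_rat_add of_rat_mult algebra_simps)

lemma iota_det:
  "iota1 d w1 * iota2 d w2 - iota1 d w2 * iota2 d w1
     = - 2 * sqrt (real_of_int d) * real_of_rat (fst w1 * snd w2 - snd w1 * fst w2)"
  by (simp add: iota1_def iota2_def of_rat_add of_rat_mult of_rat_diff algebra_simps)

lemma qlattice_range: "qlattice w1 w2 = (\<lambda>(m, n). (of_int m * fst w1 + of_int n * fst w2, of_int m * snd w1 + of_int n * snd w2)) ` UNIV"
  by (auto simp: qlattice_def)

lemma qlattice_basis: "w1 \<in> qlattice w1 w2" "w2 \<in> qlattice w1 w2"
  unfolding qlattice_range by (force intro: rev_image_eqI[of "(1, 0)"], force intro: rev_image_eqI[of "(0, 1)"])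

lemma stable_lattice_of_unit:
  assumes d: "d > 0"
    and w_indep: "fst w1 * snd w2 - snd w1 * fst w2 \<noteq> 0"
    and eps_gt: "iota1 d \<epsilon> > 1"
    and eps_conj: "iota2 d \<epsilon> = inverse (iota1 d \<epsilon>)"
    and eps_L: "\<forall>l\<in>qlattice w1 w2. kmult d \<epsilon> l \<in> qlattice w1 w2"
  shows "\<exists>m11 m12 m21 m22.
           stable_lattice (iota1 d \<epsilon>) (iota1 d w1) (iota2 d w1) (iota1 d w2) (iota2 d w2) m11 m12 m21 m22"
proof -
  obtain m11 m21 where m1: "kmult d \<epsilon> w1 = (of_int m11 * fst w1 + of_int m21 * fst w2, of_int m11 * snd w1 + of_int m21 * snd w2)"
    using eps_L qlattice_basis(1) unfolding qlattice_def by blast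
  obtain m12 m22 where m2: "kmult d \<epsilon> w2 = (of_int m12 * fst w1 + of_int m22 * fst w2, of_int m12 * snd w1 + of_int m22 * snd w2)"
    using eps_L qlattice_basis(2) unfolding qlattice_def by blast
  have "stable_lattice (iota1 d \<epsilon>) (iota1 d w1) (iota2 d w1) (iota1 d w2) (iota2 d w2) m11 m12 m21 m22"
  proof
    show "iota1 d w1 * iota2 d w2 - iota1 d w2 * iota2 d w1 \<noteq> 0"
      unfolding iota_det using d w_indep by simp
    show "iota1 d \<epsilon> * iota1 d w1 = m11 * iota1 d w1 + m21 * iota1 d w2"
      "inverse (iota1 d \<epsilon>) * iota2 d w1 = m11 * iota2 d w1 + m21 * iota2 d w2"
      "iota1 d \<epsilon> * iota1 d w2 = m12 * iota1 d w1 + m22 * iota1 d w2"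
      "inverse (iota1 d \<epsilon>) * iota2 d w2 = m12 * iota2 d w1 + m22 * iota2 d w2"
      using iota_kmult[OF d, of \<epsilon> w1] iota_kmult[OF d, of \<epsilon> w2]
      unfolding m1 m2 iota_int_combination eps_conj by simp_all
  qed (rule eps_gt)
  then show ?thesis by blast
qed

lemma (in stable_lattice) Lam_eq_Lat:
  assumes "x1 = iota1 d w1" "y1 = iota2 d w1" "x2 = iota1 d w2" "y2 = iota2 d w2"
  shows "Lam d w1 w2 = Lat"
  unfolding Lam_def qlattice_range Lat_def
  by (simp add: image_image case_prod_beta lat_def iota_int_combination assms[symmetric])

theorem lemma5p3:
  fixes d :: int and w1 w2 \<epsilon> :: qf and \<sigma> :: "(real \<times> real) \<times> int \<Rightarrow> (real \<times> real) \<times> int \<Rightarrow> complex"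
  assumes d_gt: "d > 1"
    and d_nonsq: "\<forall>n::int. n * n \<noteq> d"
    and w_indep: "fst w1 * snd w2 - snd w1 * fst w2 \<noteq> 0"
    and eps_gt: "iota1 d \<epsilon> > 1"
    and eps_conj: "iota2 d \<epsilon> = inverse (iota1 d \<epsilon>)"
    and eps_L: "\<forall>l\<in>qlattice w1 w2. kmult d \<epsilon> l \<in> qlattice w1 w2"
    and sigma: "U1_cocycle (Scar (Lam d w1 w2)) (Smul (iota1 d \<epsilon>)) \<sigma>"
  shows "\<exists>\<zeta>. real_cocycle (Scar (Lam d w1 w2)) (Smul (iota1 d \<epsilon>)) \<zeta> \<and>
             U1_cohomologous (Scar (Lam d w1 w2)) (Smul (iota1 d \<epsilon>)) \<sigma>
               (\<lambda>g h. exp (2 * complex_of_real pi * \<i> * complex_of_real (\<zeta> g h)))"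
proof -
  \<comment> \<open>only the real embeddings enter\<close>
  obtain m11 m12 m21 m22 where
    "stable_lattice (iota1 d \<epsilon>) (iota1 d w1) (iota2 d w1) (iota1 d w2) (iota2 d w2) m11 m12 m21 m22"
    using stable_lattice_of_unit d_gt w_indep eps_gt eps_conj eps_L by fastforce
  then interpret stable_lattice "iota1 d \<epsilon>" "iota1 d w1" "iota2 d w1" "iota1 d w2" "iota2 d w2" m11 m12 m21 m22 .
  have "Scar (Lam d w1 w2) = S"
    by (simp add: S_def Lam_eq_Lat)
  then show ?thesis
    using U1_cocycle_cohomologous_to_real sigma unfolding exp2pi_def by simp
qed

end
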